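(* Let $\mathcal H$ be a family of graphs. The following are equivalent: (i) there is a constant $c=c(\mathcal H)$ such that every connected $\mathcal H$-free graph $G$ has fewer than $c$ vertices $v$ with $\mathrm{sdeg}(v)\ge 2$ (equivalently, fewer than $c$ cut vertices); (ii) there is a positive integer $n$ such that $\mathcal H\le \{K_n^*,\ K_{1,n}^*,\ P_n\}$.
   Context: All graphs are finite, simple, undirected. For graphs $H_1,H_2$, write $H_1\prec H_2$ if $H_2$ contains an induced subgraph isomorphic to $H_1$. A graph $G$ is $\mathcal H$-free if no $H\in\mathcal H$ satisfies $H\prec G$. For families $\mathcal H_1,\mathcal H_2$, write $\mathcal H_1\le\mathcal H_2$ if for every $H_2\in\mathcal H_2$ there is $H_1\in\mathcal H_1$ with $H_1\prec H_2$. For a vertex $v$ of $G$, the sharp degree is $\mathrm{sdeg}(v)=c(G-v)-c(G)+1$, where $c(\cdot)$ is the number of connected components. $K_n$ and $P_n$ are the complete graph and path on $n$ vertices. $K_{1,n}^*$ is obtained from the star $K_{1,n}$ by attaching a new pendant vertex to each leaf; $K_n^*$ is obtained from $K_n$ by attaching a new pendant vertex to each vertex. *)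

theory Defs
  imports Main
begin

type_synonym 'a graph = "'a set \<times> ('a \<Rightarrow> 'a \<Rightarrow> bool)"

definition is_graph :: "'a graph \<Rightarrow> bool" where
  "is_graph G \<longleftrightarrow> finite (fst G) \<and>
     (\<forall>x y. snd G x y \<longrightarrow> x \<in> fst G \<and> y \<in> fst G \<and> x \<noteq> y) \<and>
     (\<forall>x y. snd G x y \<longrightarrow> snd G y x)"

definition induced_sub :: "'a graph \<Rightarrow> 'b graph \<Rightarrow> bool" where
  "induced_sub H G \<longleftrightarrow> (\<exists>f. inj_on f (fst H) \<and> f ` fst H \<subseteq> fst G \<and>
     (\<forall>x\<in>fst H. \<forall>y\<in>fst H. snd H x y \<longleftrightarrow> snd G (f x) (f y)))"

definition H_free :: "'a graph set \<Rightarrow> 'b graph \<Rightarrow> bool" where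
  "H_free \<H> G \<longleftrightarrow> (\<forall>H\<in>\<H>. \<not> induced_sub H G)"

definition fam_le :: "'a graph set \<Rightarrow> 'b graph set \<Rightarrow> bool" where
  "fam_le \<H>1 \<H>2 \<longleftrightarrow> (\<forall>H2\<in>\<H>2. \<exists>H1\<in>\<H>1. induced_sub H1 H2)"

definition reach :: "'a graph \<Rightarrow> 'a \<Rightarrow> 'a \<Rightarrow> bool" where
  "reach G = (\<lambda>a b. a \<in> fst G \<and> b \<in> fst G \<and> snd G a b)\<^sup>*\<^sup>*"

definition ncomp :: "'a graph \<Rightarrow> nat" where
  "ncomp G = card ((\<lambda>v. {u \<in> fst G. reach G v u}) ` fst G)"

definition connected_graph :: "'a graph \<Rightarrow> bool" where
  "connected_graph G \<longleftrightarrow> fst G \<noteq> {} \<and> (\<forall>x\<in>fst G. \<forall>y\<in>fst G. reach G x y)"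

definition delete_vertex :: "'a graph \<Rightarrow> 'a \<Rightarrow> 'a graph" where
  "delete_vertex G v = (fst G - {v}, \<lambda>x y. snd G x y \<and> x \<noteq> v \<and> y \<noteq> v)"

definition sdeg :: "'a graph \<Rightarrow> 'a \<Rightarrow> int" where
  "sdeg G v = int (ncomp (delete_vertex G v)) - int (ncomp G) + 1"

definition path_graph :: "nat \<Rightarrow> nat graph" where
  "path_graph n = ({0..<n}, \<lambda>x y. x < n \<and> y < n \<and> (x + 1 = y \<or> y + 1 = x))"

text \<open>K_n^*: clique on 0..n-1, vertex n+i is a pendant attached to i.\<close>
definition clique_star :: "nat \<Rightarrow> nat graph" where
  "clique_star n = ({0..<2*n}, \<lambda>x y.
      (x < n \<and> y < n \<and> x \<noteq> y) \<or> (x < n \<and> y = n + x) \<or> (y < n \<and> x = n + y))"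

text \<open>K_{1,n}^*: centre 0, leaves 1..n, vertex n+i is a pendant attached to leaf i.\<close>
definition star_star :: "nat \<Rightarrow> nat graph" where
  "star_star n = ({0..<2*n+1}, \<lambda>x y.
      (x = 0 \<and> 1 \<le> y \<and> y \<le> n) \<or> (y = 0 \<and> 1 \<le> x \<and> x \<le> n) \<or>
      (1 \<le> x \<and> x \<le> n \<and> y = n + x) \<or> (1 \<le> y \<and> y \<le> n \<and> x = n + y))"

end

theory Submission
  imports Defs "HOL-Library.Ramsey"
begin

text \<open>
  If each of K_n^*, K_{1,n}^* and P_n contains a member of \<H>, then an \<H>-free graph contains
  none of them, since induced containment is transitive. Conversely, the three graphs are connected
  and have at least n - 2 cut vertices, so for n = c + 2 each of them contains a member of \<H>, or
  it would violate the bound c.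

  To bound the cut vertices of a connected graph without induced K_n^*, K_{1,n}^*, P_n, sort its
  vertices into breadth-first levels from a root r. Shortest paths are induced, so there are fewer
  than n levels. A cut vertex c \<noteq> r has a neighbour d(c) on the next level that c separates from
  r, and for the cut vertices of one level the edges c d(c) form a matching whose only further edges
  join lower ends. By Ramsey's theorem, many such edges yield K_n^* or a large induced matching
  between two consecutive levels. The lower ends of an induced matching between levels l + 1 and
  l + 2 either contain n neighbours of one vertex of level l, which gives K_{1,n}^*, or, after a
  greedy thinning, form with their parents on level l again a matching of the first kind. Since an
  induced matching leaving level 0 has only one edge, this bounds the cut vertices of each level.
\<close>

section \<open>Induced subgraphs\<close>

lemma induced_sub_trans:
  assumes "induced_sub H K" "induced_sub K G"
  shows "induced_sub H G"
proof -
  obtain f where f: "inj_on f (fst H)" "f ` fst H \<subseteq> fst K"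
    "\<forall>x\<in>fst H. \<forall>y\<in>fst H. snd H x y \<longleftrightarrow> snd K (f x) (f y)"
    using assms(1) unfolding induced_sub_def by blast
  obtain g where g: "inj_on g (fst K)" "g ` fst K \<subseteq> fst G"
    "\<forall>x\<in>fst K. \<forall>y\<in>fst K. snd K x y \<longleftrightarrow> snd G (g x) (g y)"
    using assms(2) unfolding induced_sub_def by blast
  have "inj_on (g \<circ> f) (fst H)"
    using f g by (meson comp_inj_on inj_on_subset)
  with f g show ?thesis
    unfolding induced_sub_def by (intro exI[of _ "g \<circ> f"]) (auto simp: image_subset_iff)
qed

lemma not_induced_sub_if_fam_le:
  assumes "fam_le \<H> \<K>" "H_free \<H> G" "K \<in> \<K>"
  shows "\<not> induced_sub K G"
  using assms induced_sub_trans unfolding fam_le_def H_free_def by blast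

lemma induced_subI_less:
  fixes H :: "'b::linorder graph"
  assumes "is_graph H" "is_graph G" "f ` fst H \<subseteq> fst G"
    and ordered: "\<And>x y. x \<in> fst H \<Longrightarrow> y \<in> fst H \<Longrightarrow> x < y \<Longrightarrow>
      f x \<noteq> f y \<and> (snd H x y \<longleftrightarrow> snd G (f x) (f y))"
  shows "induced_sub H G"
proof -
  have "inj_on f (fst H)"
    by (rule inj_onI) (metis ordered linorder_neq_iff)
  moreover have "snd H x y \<longleftrightarrow> snd G (f x) (f y)" if "x \<in> fst H" "y \<in> fst H" for x y
  proof (cases x y rule: linorder_cases)
    case less
    then show ?thesis using that ordered by blast
  next
    case equal
    then show ?thesis using assms(1,2) unfolding is_graph_def by blast
  next
    case greater
    then have "snd H y x \<longleftrightarrow> snd G (f y) (f x)"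
      using that ordered by blast
    then show ?thesis using assms(1,2) unfolding is_graph_def by blast
  qed
  ultimately show ?thesis
    unfolding induced_sub_def using assms(3) by blast
qed

section \<open>Connectivity and cut vertices\<close>

abbreviation cut_vertices :: "'a graph \<Rightarrow> 'a set" where
  "cut_vertices G \<equiv> {v \<in> fst G. 2 \<le> sdeg G v}"

lemma reach_edge:
  assumes "is_graph G" "snd G a b"
  shows "reach G a b"
  using assms unfolding reach_def is_graph_def by auto

lemma reach_sym:
  assumes "is_graph G" "reach G a b"
  shows "reach G b a"
proof -
  have sym: "symp (\<lambda>a b. a \<in> fst G \<and> b \<in> fst G \<and> snd G a b)"
    using assms(1) unfolding is_graph_def by (auto intro: sympI)
  show ?thesis
    using assms(2) unfolding reach_def by (rule sympD[OF symp_rtranclp[OF sym]])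
qed

lemma reach_closed:
  assumes "reach G a b" "a \<in> S" "\<And>x y. x \<in> S \<Longrightarrow> snd G x y \<Longrightarrow> y \<in> S"
  shows "b \<in> S"
  using assms(1) unfolding reach_def by (induction rule: rtranclp_induct) (auto intro: assms)

lemma connected_graph_if_reach_from:
  assumes "is_graph G" "r \<in> fst G" "\<And>x. x \<in> fst G \<Longrightarrow> reach G r x"
  shows "connected_graph G"
proof -
  have "reach G x y" if "x \<in> fst G" "y \<in> fst G" for x y
    using reach_sym[OF assms(1) assms(3)[OF that(1)]] assms(3)[OF that(2)]
    unfolding reach_def by (rule rtranclp_trans)
  then show ?thesis
    using assms(2) unfolding connected_graph_def by blast
qed

lemma ncomp_connected:
  assumes "connected_graph G"
  shows "ncomp G = 1"
proof -
  have "(\<lambda>v. {u \<in> fst G. reach G v u}) ` fst G = {fst G}"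
    using assms unfolding connected_graph_def by auto
  then show ?thesis
    unfolding ncomp_def by simp
qed

lemma ncomp_ge_2:
  assumes "finite (fst G)" "a \<in> fst G" "b \<in> fst G" "\<not> reach G a b"
  shows "2 \<le> ncomp G"
proof -
  let ?comp = "\<lambda>v. {u \<in> fst G. reach G v u}"
  have "?comp a \<noteq> ?comp b"
    using assms(3,4) unfolding reach_def by auto
  moreover have "{?comp a, ?comp b} \<subseteq> ?comp ` fst G"
    using assms(2,3) by auto
  ultimately have "2 \<le> card (?comp ` fst G)"
    using assms(1) card_mono[of "?comp ` fst G" "{?comp a, ?comp b}"] by simp
  then show ?thesis
    unfolding ncomp_def .
qed

lemma is_graph_delete_vertex:
  "is_graph G \<Longrightarrow> is_graph (delete_vertex G v)"
  unfolding is_graph_def delete_vertex_def by auto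

lemma cut_vertex_iff:
  assumes "is_graph G" "connected_graph G" "r \<in> fst G" "r \<noteq> v"
  shows "2 \<le> sdeg G v \<longleftrightarrow> (\<exists>x \<in> fst G - {v}. \<not> reach (delete_vertex G v) r x)"
proof -
  have sdeg: "sdeg G v = int (ncomp (delete_vertex G v))"
    using ncomp_connected[OF assms(2)] unfolding sdeg_def by simp
  have vertices: "fst (delete_vertex G v) = fst G - {v}"
    by (simp add: delete_vertex_def)
  have r: "r \<in> fst (delete_vertex G v)"
    using assms(3,4) vertices by simp
  show ?thesis
  proof
    assume "2 \<le> sdeg G v"
    then have "ncomp (delete_vertex G v) \<noteq> 1"
      using sdeg by simp
    then have "\<not> connected_graph (delete_vertex G v)"
      using ncomp_connected by blast
    moreover have "connected_graph (delete_vertex G v)"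
      if "\<forall>x \<in> fst G - {v}. reach (delete_vertex G v) r x"
      using connected_graph_if_reach_from[OF is_graph_delete_vertex[OF assms(1)] r] that
      unfolding vertices by blast
    ultimately show "\<exists>x \<in> fst G - {v}. \<not> reach (delete_vertex G v) r x"
      by blast
  next
    assume "\<exists>x \<in> fst G - {v}. \<not> reach (delete_vertex G v) r x"
    then obtain x where x: "x \<in> fst (delete_vertex G v)" "\<not> reach (delete_vertex G v) r x"
      unfolding vertices by blast
    have "finite (fst (delete_vertex G v))"
      using assms(1) unfolding vertices is_graph_def by blast
    then have "2 \<le> ncomp (delete_vertex G v)"
      by (rule ncomp_ge_2[OF _ r x])
    then show "2 \<le> sdeg G v"
      using sdeg by simp
  qed
qed

lemma connected_graph_if_smaller_neighbour:
  fixes G :: "nat graph"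
  assumes "is_graph G" "0 \<in> fst G" and down: "\<And>x. x \<in> fst G \<Longrightarrow> 0 < x \<Longrightarrow> \<exists>y<x. snd G x y"
  shows "connected_graph G"
proof (rule connected_graph_if_reach_from[OF assms(1,2)])
  show "reach G 0 x" if "x \<in> fst G" for x
    using that
  proof (induction x rule: less_induct)
    case (less x)
    show ?case
    proof (cases "x = 0")
      case True
      then show ?thesis by (simp add: reach_def)
    next
      case False
      then obtain y where y: "y < x" "snd G x y"
        using down less.prems by blast
      have "reach G 0 y"
        using less.IH y assms(1) unfolding is_graph_def by blast
      moreover have "reach G y x"
        using reach_edge[OF assms(1)] y(2) assms(1) unfolding is_graph_def by blast
      ultimately show ?thesis
        unfolding reach_def by (rule rtranclp_trans)
    qed
  qed
qed

section \<open>The obstructions\<close>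

lemma is_graph_clique_star: "is_graph (clique_star n)"
  unfolding is_graph_def clique_star_def by auto

lemma is_graph_star_star: "is_graph (star_star n)"
  unfolding is_graph_def star_star_def by auto

lemma is_graph_path_graph: "is_graph (path_graph n)"
  unfolding is_graph_def path_graph_def by auto

lemma connected_graph_clique_star: "0 < n \<Longrightarrow> connected_graph (clique_star n)"
proof (rule connected_graph_if_smaller_neighbour[OF is_graph_clique_star])
  show "\<exists>y<x. snd (clique_star n) x y" if "x \<in> fst (clique_star n)" "0 < x" for x
  proof (cases "x < n")
    case True
    then show ?thesis using that(2) by (auto simp: clique_star_def)
  next
    case False
    then show ?thesis using that by (intro exI[of _ "x - n"]) (auto simp: clique_star_def)
  qed
qed (simp add: clique_star_def)

lemma connected_graph_star_star: "connected_graph (star_star n)"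
proof (rule connected_graph_if_smaller_neighbour[OF is_graph_star_star])
  show "\<exists>y<x. snd (star_star n) x y" if "x \<in> fst (star_star n)" "0 < x" for x
  proof (cases "x \<le> n")
    case True
    then show ?thesis using that(2) by (auto simp: star_star_def)
  next
    case False
    then show ?thesis using that by (intro exI[of _ "x - n"]) (auto simp: star_star_def)
  qed
qed (simp add: star_star_def)

lemma connected_graph_path_graph: "0 < n \<Longrightarrow> connected_graph (path_graph n)"
proof (rule connected_graph_if_smaller_neighbour[OF is_graph_path_graph])
  show "\<exists>y<x. snd (path_graph n) x y" if "x \<in> fst (path_graph n)" "0 < x" for x
    using that by (intro exI[of _ "x - 1"]) (auto simp: path_graph_def)
qed (simp add: path_graph_def)

lemma cut_vertex_clique_star:
  assumes "2 \<le> n" "i < n"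
  shows "i \<in> cut_vertices (clique_star n)"
proof -
  let ?j = "if i = 0 then 1 else 0"
  have "\<not> reach (delete_vertex (clique_star n) i) (n + i) ?j"
  proof
    assume "reach (delete_vertex (clique_star n) i) (n + i) ?j"
    then have "?j \<in> {n + i}"
      by (rule reach_closed) (use assms in \<open>auto simp: delete_vertex_def clique_star_def\<close>)
    then show False
      using assms by (simp split: if_splits)
  qed
  moreover have "n + i \<in> fst (clique_star n)" "?j \<in> fst (clique_star n) - {i}" "i \<in> fst (clique_star n)"
    using assms by (auto simp: clique_star_def)
  ultimately show ?thesis
    using cut_vertex_iff[OF is_graph_clique_star connected_graph_clique_star, where r = "n + i" and v = i]
      assms by auto
qed

lemma cut_vertex_star_star:
  assumes "1 \<le> i" "i \<le> n"
  shows "i \<in> cut_vertices (star_star n)"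
proof -
  have "\<not> reach (delete_vertex (star_star n) i) (n + i) 0"
  proof
    assume "reach (delete_vertex (star_star n) i) (n + i) 0"
    then have "0 \<in> {n + i}"
      by (rule reach_closed) (use assms in \<open>auto simp: delete_vertex_def star_star_def\<close>)
    then show False
      using assms by auto
  qed
  moreover have "n + i \<in> fst (star_star n)" "0 \<in> fst (star_star n) - {i}" "i \<in> fst (star_star n)"
    using assms by (auto simp: star_star_def)
  ultimately show ?thesis
    using cut_vertex_iff[OF is_graph_star_star connected_graph_star_star, where r = "n + i" and v = i]
      assms by auto
qed

lemma cut_vertex_path_graph:
  assumes "1 \<le> i" "i + 1 < n"
  shows "i \<in> cut_vertices (path_graph n)"
proof -
  have "\<not> reach (delete_vertex (path_graph n) i) 0 (i + 1)"
  proof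
    assume "reach (delete_vertex (path_graph n) i) 0 (i + 1)"
    then have "i + 1 \<in> {..<i}"
      by (rule reach_closed) (use assms in \<open>auto simp: delete_vertex_def path_graph_def\<close>)
    then show False
      using assms by auto
  qed
  moreover have "0 \<in> fst (path_graph n)" "i + 1 \<in> fst (path_graph n) - {i}" "i \<in> fst (path_graph n)"
    using assms by (auto simp: path_graph_def)
  ultimately show ?thesis
    using cut_vertex_iff[OF is_graph_path_graph connected_graph_path_graph, where r = 0 and v = i]
      assms by auto
qed

lemma obstruction_many_cut_vertices:
  assumes "H \<in> {clique_star (c + 2), star_star (c + 2), path_graph (c + 2)}"
  shows "is_graph H" "connected_graph H" "c \<le> card (cut_vertices H)"
proof -
  consider "H = clique_star (c + 2)" | "H = star_star (c + 2)" | "H = path_graph (c + 2)"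
    using assms by blast
  then obtain S where S: "S \<subseteq> cut_vertices H" "card S = c"
  proof cases
    case 1
    then show ?thesis using that[of "{0..<c}"] cut_vertex_clique_star by force
  next
    case 2
    then show ?thesis using that[of "{1..c}"] cut_vertex_star_star by force
  next
    case 3
    then show ?thesis using that[of "{1..c}"] cut_vertex_path_graph by force
  qed
  moreover have "finite (cut_vertices H)"
    using assms by (auto simp: clique_star_def star_star_def path_graph_def)
  ultimately show "c \<le> card (cut_vertices H)"
    using card_mono by metis
  show "is_graph H" "connected_graph H"
    using assms is_graph_clique_star is_graph_star_star is_graph_path_graph
      connected_graph_clique_star connected_graph_star_star connected_graph_path_graph
    by auto
qed

lemma fam_le_obstructions_if_bounded:
  assumes bounded: "\<And>G :: nat graph. is_graph G \<Longrightarrow> connected_graph G \<Longrightarrow> H_free \<H> G \<Longrightarrow>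
    card (cut_vertices G) < c"
  shows "fam_le \<H> {clique_star (c + 2), star_star (c + 2), path_graph (c + 2)}"
  unfolding fam_le_def
proof
  fix K assume K: "K \<in> {clique_star (c + 2), star_star (c + 2), path_graph (c + 2)}"
  show "\<exists>H\<in>\<H>. induced_sub H K"
  proof (rule ccontr)
    assume "\<not> ?thesis"
    then have "card (cut_vertices K) < c"
      using bounded obstruction_many_cut_vertices(1,2)[OF K] unfolding H_free_def by blast
    then show False
      using obstruction_many_cut_vertices(3)[OF K] by simp
  qed
qed

section \<open>Ramsey-type lemmas\<close>

lemma ramsey_symp:
  fixes R :: "'a \<Rightarrow> 'a \<Rightarrow> bool"
  assumes "finite X" "(m + k) choose m \<le> card X" "symp R"
  obtains Y where "Y \<subseteq> X" "card Y = m" "\<And>a b. a \<in> Y \<Longrightarrow> b \<in> Y \<Longrightarrow> a \<noteq> b \<Longrightarrow> R a b"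
    | Y where "Y \<subseteq> X" "card Y = k" "\<And>a b. a \<in> Y \<Longrightarrow> b \<in> Y \<Longrightarrow> a \<noteq> b \<Longrightarrow> \<not> R a b"
proof -
  let ?N = "(m + k) choose m"
  have partition: "partn_lst {..<?N} [m, k] 2"
    using ramsey2_full[of 2 m k] by (simp add: ES2_choose)
  obtain v where v: "inj_on v {..<?N}" "v ` {..<?N} \<subseteq> X"
    using assms(1,2) by (metis card_le_inj card_lessThan finite_lessThan)
  define f where "f e = (if \<exists>x y. e = {x, y} \<and> R (v x) (v y) then 0 else 1 :: nat)" for e
  have f_pair: "f {x, y} = (if R (v x) (v y) then 0 else 1)" for x y
    using assms(3) unfolding f_def by (auto simp: doubleton_eq_iff dest: sympD)
  have "f \<in> nsets {..<?N} 2 \<rightarrow> {..<length [m, k]}"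
    by (simp add: f_def)
  then obtain i U where i: "i < 2" and U: "U \<in> nsets {..<?N} ([m, k] ! i)"
    and mono: "f ` nsets U 2 \<subseteq> {i}"
    using partition numeral_2_eq_2 by (auto simp: partn_lst_def monochromatic_def)
  have U': "U \<subseteq> {..<?N}" "finite U" "card U = [m, k] ! i"
    using U finite_subset[of U "{..<?N}"] by (auto simp: nsets_def)
  have vU: "v ` U \<subseteq> X" "card (v ` U) = [m, k] ! i"
    using U' v inj_on_subset[OF v(1)] by (auto simp: card_image)
  have colour: "f {x, y} = i" if "x \<in> U" "y \<in> U" "x \<noteq> y" for x y
    using mono doubleton_in_nsets_2[of x y U] that by blast
  have R: "R a b \<longleftrightarrow> i = 0" if "a \<in> v ` U" "b \<in> v ` U" "a \<noteq> b" for a b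
    using that colour f_pair by (auto split: if_splits) (metis zero_neq_one)+
  show ?thesis
  proof (cases "i = 0")
    case True
    then show ?thesis
      using that(1)[of "v ` U"] vU R by simp
  next
    case False
    then have "i = 1"
      using i by simp
    then show ?thesis
      using that(2)[of "v ` U"] vU R by simp
  qed
qed

lemma ex_in_degree_less:
  assumes "finite X" "X \<noteq> {}" "\<And>a. a \<in> X \<Longrightarrow> card {b \<in> X. Q a b} < n"
  shows "\<exists>a\<in>X. card {b \<in> X. Q b a} < n"
proof (rule ccontr)
  assume "\<not> ?thesis"
  then have "(\<Sum>a\<in>X. n) \<le> (\<Sum>a\<in>X. card {b \<in> X. Q b a})"
    by (intro sum_mono) auto
  also have "\<dots> = (\<Sum>a\<in>X. \<Sum>b\<in>X. if Q b a then 1 else 0)"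
    using assms(1) by (simp add: sum.inter_filter[symmetric])
  also have "\<dots> = (\<Sum>b\<in>X. \<Sum>a\<in>X. if Q b a then 1 else 0)"
    by (rule sum.swap)
  also have "\<dots> = (\<Sum>b\<in>X. card {a \<in> X. Q b a})"
    using assms(1) by (simp add: sum.inter_filter[symmetric])
  also have "\<dots> < (\<Sum>b\<in>X. n)"
    using assms by (intro sum_strict_mono) auto
  finally show False
    by simp
qed

lemma independent_subset_if_out_degree_less:
  assumes "finite X" "0 < n" "\<And>a. a \<in> X \<Longrightarrow> card {b \<in> X. Q a b} < n" "2 * n * k \<le> card X"
  shows "\<exists>Y \<subseteq> X. k \<le> card Y \<and> (\<forall>a\<in>Y. \<forall>b\<in>Y. a \<noteq> b \<longrightarrow> \<not> Q a b)"
  using assms(1,3,4)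
proof (induction k arbitrary: X)
  case 0
  show ?case by blast
next
  case (Suc k)
  have "X \<noteq> {}"
    using Suc.prems(3) assms(2) by auto
  then obtain a where a: "a \<in> X" "card {b \<in> X. Q b a} < n"
    using ex_in_degree_less Suc.prems(1,2) by blast
  define N where "N = insert a ({b \<in> X. Q a b} \<union> {b \<in> X. Q b a})"
  have "N \<subseteq> X" "finite N"
    using a(1) Suc.prems(1) finite_subset unfolding N_def by auto
  have "card N \<le> Suc (card ({b \<in> X. Q a b} \<union> {b \<in> X. Q b a}))"
    unfolding N_def using Suc.prems(1) by (simp add: card_insert_if)
  also have "\<dots> \<le> Suc (card {b \<in> X. Q a b} + card {b \<in> X. Q b a})"
    using card_Un_le by simp
  also have "\<dots> \<le> 2 * n"
    using a(2) Suc.prems(2)[OF a(1)] by linarith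
  finally have "2 * n * k \<le> card (X - N)"
    using Suc.prems(3) card_Diff_subset[OF \<open>finite N\<close> \<open>N \<subseteq> X\<close>] by simp
  moreover have "card {b \<in> X - N. Q x b} < n" if "x \<in> X - N" for x
  proof -
    have "card {b \<in> X - N. Q x b} \<le> card {b \<in> X. Q x b}"
      using Suc.prems(1) by (intro card_mono) auto
    then show ?thesis
      using Suc.prems(2)[of x] that by simp
  qed
  ultimately obtain Y where Y: "Y \<subseteq> X - N" "k \<le> card Y" "\<forall>a\<in>Y. \<forall>b\<in>Y. a \<noteq> b \<longrightarrow> \<not> Q a b"
    using Suc.IH[of "X - N"] Suc.prems(1) by blast
  have "a \<notin> Y" "finite Y"
    using Y(1) Suc.prems(1) finite_subset unfolding N_def by auto
  then have "Suc k \<le> card (insert a Y)"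
    using Y(2) by simp
  moreover have "insert a Y \<subseteq> X"
    using Y(1) a(1) by blast
  moreover have "\<forall>x\<in>insert a Y. \<forall>y\<in>insert a Y. x \<noteq> y \<longrightarrow> \<not> Q x y"
    using Y a(1) unfolding N_def by blast
  ultimately show ?case
    by blast
qed

section \<open>Induced copies of K_n^* and K_{1,n}^*\<close>

locale simple_graph =
  fixes V :: "'a set" and E :: "'a \<Rightarrow> 'a \<Rightarrow> bool"
  assumes is_graph: "is_graph (V, E)"
begin

lemma finite_vertices: "finite V"
  using is_graph unfolding is_graph_def by simp

lemma edge_vertices: "E x y \<Longrightarrow> x \<in> V \<and> y \<in> V"
  using is_graph unfolding is_graph_def by simp

lemma edge_sym: "E x y \<Longrightarrow> E y x"
  using is_graph unfolding is_graph_def by simp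

lemma edge_irrefl: "\<not> E x x"
  using is_graph unfolding is_graph_def by auto

lemma induced_sub_clique_starI:
  fixes a b :: "nat \<Rightarrow> 'a"
  assumes edge: "\<And>k. k < n \<Longrightarrow> E (a k) (b k)"
    and pair: "\<And>k l. k < n \<Longrightarrow> l < n \<Longrightarrow> k \<noteq> l \<Longrightarrow>
      E (a k) (a l) \<and> b k \<noteq> b l \<and> \<not> E (a k) (b l) \<and> \<not> E (b k) (b l)"
  shows "induced_sub (clique_star n) (V, E)"
proof -
  define f where "f x = (if x < n then a x else b (x - n))" for x
  show ?thesis
  proof (rule induced_subI_less[OF is_graph_clique_star is_graph, of f])
    have "a k \<in> V" "b k \<in> V" if "k < n" for k
      using edge edge_vertices that by blast+
    then show "f ` fst (clique_star n) \<subseteq> fst (V, E)"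
      by (auto simp: f_def clique_star_def)
    fix x y assume xy: "x \<in> fst (clique_star n)" "y \<in> fst (clique_star n)" "x < y"
    consider "y < n" | "x < n" "n \<le> y" | "n \<le> x"
      by linarith
    then show "f x \<noteq> f y \<and> (snd (clique_star n) x y \<longleftrightarrow> snd (V, E) (f x) (f y))"
    proof cases
      case 1
      then show ?thesis
        using pair[of x y] xy edge_irrefl by (fastforce simp: f_def clique_star_def)
    next
      case 2
      then show ?thesis
        using pair[of x "y - n"] pair[of "y - n" x] edge[of x] xy edge_irrefl
        by (cases "y = n + x") (auto simp: f_def clique_star_def)
    next
      case 3
      then show ?thesis
        using pair[of "x - n" "y - n"] xy by (auto simp: f_def clique_star_def)
    qed
  qed
qed

lemma induced_sub_star_starI:
  fixes a b :: "nat \<Rightarrow> 'a"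
  assumes "u \<in> V"
    and edge: "\<And>k. k < n \<Longrightarrow> E (a k) (b k) \<and> E u (a k) \<and> \<not> E u (b k) \<and> u \<noteq> b k"
    and pair: "\<And>k l. k < n \<Longrightarrow> l < n \<Longrightarrow> k \<noteq> l \<Longrightarrow>
      a k \<noteq> a l \<and> b k \<noteq> b l \<and> \<not> E (a k) (a l) \<and> \<not> E (a k) (b l) \<and> \<not> E (b k) (b l)"
  shows "induced_sub (star_star n) (V, E)"
proof -
  define f where "f x = (if x = 0 then u else if x \<le> n then a (x - 1) else b (x - n - 1))" for x
  have ab_ne: "a k \<noteq> b l" if "k < n" "l < n" for k l
    using edge[of k] edge[of l] pair[of l k] edge_irrefl that by (cases "k = l") auto
  show ?thesis
  proof (rule induced_subI_less[OF is_graph_star_star is_graph, of f])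
    have "a k \<in> V" "b k \<in> V" if "k < n" for k
      using edge edge_vertices that by blast+
    then show "f ` fst (star_star n) \<subseteq> fst (V, E)"
      using assms(1) by (auto simp: f_def star_star_def)
    fix x y assume xy: "x \<in> fst (star_star n)" "y \<in> fst (star_star n)" "x < y"
    consider "x = 0" "y \<le> n" | "x = 0" "n < y" | "0 < x" "y \<le> n" | "0 < x" "x \<le> n" "n < y" | "n < x"
      using xy(3) by linarith
    then show "f x \<noteq> f y \<and> (snd (star_star n) x y \<longleftrightarrow> snd (V, E) (f x) (f y))"
    proof cases
      case 1
      then show ?thesis
        using edge[of "y - 1"] xy edge_irrefl by (fastforce simp: f_def star_star_def)
    next
      case 2
      then show ?thesis
        using edge[of "y - n - 1"] xy by (auto simp: f_def star_star_def)
    next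
      case 3
      then show ?thesis
        using pair[of "x - 1" "y - 1"] xy by (auto simp: f_def star_star_def)
    next
      case 4
      then have "x - 1 < n" "y - n - 1 < n" "y = n + x \<longleftrightarrow> y - n - 1 = x - 1"
        using xy by (auto simp: star_star_def)
      then show ?thesis
        using 4 pair[of "x - 1" "y - n - 1"] edge[of "x - 1"] ab_ne
        by (auto simp: f_def star_star_def)
    next
      case 5
      then show ?thesis
        using pair[of "x - n - 1" "y - n - 1"] xy by (auto simp: f_def star_star_def)
    qed
  qed
qed

lemma induced_sub_clique_star:
  fixes I :: "'i set" and a b :: "'i \<Rightarrow> 'a"
  assumes "finite I"
    and edge: "\<And>i. i \<in> I \<Longrightarrow> E (a i) (b i)"
    and pair: "\<And>i j. i \<in> I \<Longrightarrow> j \<in> I \<Longrightarrow> i \<noteq> j \<Longrightarrow>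
      E (a i) (a j) \<and> b i \<noteq> b j \<and> \<not> E (a i) (b j) \<and> \<not> E (b i) (b j)"
  shows "induced_sub (clique_star (card I)) (V, E)"
proof -
  obtain h where h: "bij_betw h {0..<card I} I"
    using ex_bij_betw_nat_finite[OF assms(1)] by blast
  have hI: "h k \<in> I" if "k < card I" for k
    using bij_betwE[OF h] that by simp
  have h_inj: "h k \<noteq> h l" if "k < card I" "l < card I" "k \<noteq> l" for k l
    using bij_betw_imp_inj_on[OF h] that by (simp add: inj_on_eq_iff)
  show ?thesis
  proof (rule induced_sub_clique_starI[where a = "\<lambda>k. a (h k)" and b = "\<lambda>k. b (h k)"])
    show "E (a (h k)) (b (h k))" if "k < card I" for k
      using edge hI that by blast
    show "E (a (h k)) (a (h l)) \<and> b (h k) \<noteq> b (h l) \<and> \<not> E (a (h k)) (b (h l)) \<and> \<not> E (b (h k)) (b (h l))"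
      if "k < card I" "l < card I" "k \<noteq> l" for k l
      using pair hI h_inj that by blast
  qed
qed

lemma induced_sub_star_star:
  fixes I :: "'i set" and a b :: "'i \<Rightarrow> 'a"
  assumes "finite I" "u \<in> V"
    and edge: "\<And>i. i \<in> I \<Longrightarrow> E (a i) (b i) \<and> E u (a i) \<and> \<not> E u (b i) \<and> u \<noteq> b i"
    and pair: "\<And>i j. i \<in> I \<Longrightarrow> j \<in> I \<Longrightarrow> i \<noteq> j \<Longrightarrow>
      a i \<noteq> a j \<and> b i \<noteq> b j \<and> \<not> E (a i) (a j) \<and> \<not> E (a i) (b j) \<and> \<not> E (b i) (b j)"
  shows "induced_sub (star_star (card I)) (V, E)"
proof -
  obtain h where h: "bij_betw h {0..<card I} I"
    using ex_bij_betw_nat_finite[OF assms(1)] by blast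
  have hI: "h k \<in> I" if "k < card I" for k
    using bij_betwE[OF h] that by simp
  have h_inj: "h k \<noteq> h l" if "k < card I" "l < card I" "k \<noteq> l" for k l
    using bij_betw_imp_inj_on[OF h] that by (simp add: inj_on_eq_iff)
  show ?thesis
  proof (rule induced_sub_star_starI[OF assms(2), where a = "\<lambda>k. a (h k)" and b = "\<lambda>k. b (h k)"])
    show "E (a (h k)) (b (h k)) \<and> E u (a (h k)) \<and> \<not> E u (b (h k)) \<and> u \<noteq> b (h k)"
      if "k < card I" for k
      using edge hI that by blast
    show "a (h k) \<noteq> a (h l) \<and> b (h k) \<noteq> b (h l) \<and> \<not> E (a (h k)) (a (h l)) \<and>
        \<not> E (a (h k)) (b (h l)) \<and> \<not> E (b (h k)) (b (h l))"
      if "k < card I" "l < card I" "k \<noteq> l" for k l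
      using pair hI h_inj that by blast
  qed
qed

end

section \<open>Breadth-first levels and cut vertices\<close>

locale rooted_graph = simple_graph +
  fixes r :: 'a
  assumes connected: "connected_graph (V, E)" and root: "r \<in> V"
begin

lemma reach_eq_rtranclp: "reach (V, E) = E\<^sup>*\<^sup>*"
proof -
  have "(\<lambda>x y. x \<in> V \<and> y \<in> V \<and> E x y) = E"
    using edge_vertices by blast
  then show ?thesis
    unfolding reach_def by simp
qed

definition level :: "'a \<Rightarrow> nat" where
  "level x = (LEAST k. (E ^^ k) r x)"

lemma level_walk:
  assumes "x \<in> V"
  shows "(E ^^ level x) r x"
proof -
  have "E\<^sup>*\<^sup>* r x"
    using connected root assms unfolding connected_graph_def reach_eq_rtranclp by simp
  then obtain k where "(E ^^ k) r x"
    unfolding rtranclp_power by blast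
  then show ?thesis
    unfolding level_def by (rule LeastI)
qed

lemma level_le: "(E ^^ k) r x \<Longrightarrow> level x \<le> k"
  unfolding level_def by (rule Least_le)

lemma level_eq_0: "x \<in> V \<Longrightarrow> level x = 0 \<Longrightarrow> x = r"
  using level_walk[of x] by simp

lemma level_edge:
  assumes "E x y"
  shows "level y \<le> Suc (level x)"
proof -
  have "(E ^^ Suc (level x)) r y"
    using level_walk[of x] edge_vertices[OF assms] assms by (meson relpowp_Suc_I)
  then show ?thesis
    by (rule level_le)
qed

lemma level_parent:
  assumes "x \<in> V" "level x = Suc k"
  obtains p where "E p x" "level p = k"
proof -
  obtain p where p: "(E ^^ k) r p" "E p x"
    using level_walk[OF assms(1)] unfolding assms(2) by (rule relpowp_Suc_E)
  then have "level p = k"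
    using level_le[OF p(1)] level_edge[OF p(2)] assms(2) by simp
  then show thesis
    using that p(2) by blast
qed

lemma shortest_path:
  assumes "x \<in> V"
  obtains f where "f (level x) = x"
    "\<And>k. k \<le> level x \<Longrightarrow> f k \<in> V \<and> level (f k) = k"
    "\<And>k. k < level x \<Longrightarrow> E (f k) (f (Suc k))"
  using assms
proof (induction "level x" arbitrary: x thesis)
  case 0
  show ?case
    by (rule "0.prems"(1)[of "\<lambda>_. x"]) (use "0" in auto)
next
  case (Suc m)
  obtain p where p: "E p x" "level p = m"
    using level_parent[OF Suc.prems(2) Suc.hyps(2)[symmetric]] .
  obtain f where f: "f m = p" "\<And>k. k \<le> m \<Longrightarrow> f k \<in> V \<and> level (f k) = k"
    "\<And>k. k < m \<Longrightarrow> E (f k) (f (Suc k))"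
  proof (rule Suc.hyps(1)[OF p(2)[symmetric]])
    show "p \<in> V"
      using edge_vertices[OF p(1)] by simp
  qed (use p(2) in simp_all)
  show ?case
  proof (rule Suc.prems(1)[of "f(Suc m := x)"])
    show "(f(Suc m := x)) (level x) = x"
      using Suc.hyps(2) by simp
    show "(f(Suc m := x)) k \<in> V \<and> level ((f(Suc m := x)) k) = k" if "k \<le> level x" for k
      using that f(2)[of k] Suc.hyps(2) Suc.prems(2) by (auto simp: le_Suc_eq)
    show "E ((f(Suc m := x)) k) ((f(Suc m := x)) (Suc k))" if "k < level x" for k
      using that f(1) f(3)[of k] p(1) Suc.hyps(2) by (cases "k = m") auto
  qed
qed

lemma induced_sub_path_graph:
  assumes "x \<in> V" "n \<le> Suc (level x)"
  shows "induced_sub (path_graph n) (V, E)"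
proof -
  obtain f where f: "\<And>k. k \<le> level x \<Longrightarrow> f k \<in> V \<and> level (f k) = k"
    "\<And>k. k < level x \<Longrightarrow> E (f k) (f (Suc k))"
    using shortest_path[OF assms(1)] by blast
  show ?thesis
  proof (rule induced_subI_less[OF is_graph_path_graph is_graph, of f])
    show "f ` fst (path_graph n) \<subseteq> fst (V, E)"
      using f(1) assms(2) by (auto simp: path_graph_def)
    fix i j assume ij: "i \<in> fst (path_graph n)" "j \<in> fst (path_graph n)" "i < j"
    then have levels: "level (f i) = i" "level (f j) = j" "j \<le> level x"
      using f(1) assms(2) by (auto simp: path_graph_def)
    have "E (f i) (f j) \<longleftrightarrow> j = Suc i"
      using level_edge[of "f i" "f j"] f(2)[of i] levels ij(3) by auto
    then show "f i \<noteq> f j \<and> (snd (path_graph n) i j \<longleftrightarrow> snd (V, E) (f i) (f j))"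
      using levels ij by (auto simp: path_graph_def)
  qed
qed

lemma reach_delete_vertex:
  "reach (delete_vertex (V, E) c) = (\<lambda>x y. E x y \<and> x \<noteq> c \<and> y \<noteq> c)\<^sup>*\<^sup>*"
proof -
  have "(\<lambda>x y. x \<in> V - {c} \<and> y \<in> V - {c} \<and> E x y \<and> x \<noteq> c \<and> y \<noteq> c) =
      (\<lambda>x y. E x y \<and> x \<noteq> c \<and> y \<noteq> c)"
    using edge_vertices by blast
  then show ?thesis
    unfolding reach_def delete_vertex_def by simp
qed

definition cut_off :: "'a \<Rightarrow> 'a set" where
  "cut_off c = {x \<in> V - {c}. \<not> reach (delete_vertex (V, E) c) r x}"

lemma cut_off_edge:
  assumes "x \<in> cut_off c" "E x y" "y \<noteq> c"
  shows "y \<in> cut_off c"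
proof -
  have "\<not> reach (delete_vertex (V, E) c) r y"
  proof
    assume "reach (delete_vertex (V, E) c) r y"
    moreover have "E y x" "x \<noteq> c"
      using assms edge_sym unfolding cut_off_def by auto
    ultimately have "reach (delete_vertex (V, E) c) r x"
      using assms(3) unfolding reach_delete_vertex by (simp add: rtranclp.rtrancl_into_rtrancl)
    then show False
      using assms(1) unfolding cut_off_def by blast
  qed
  then show ?thesis
    using assms(2,3) edge_vertices unfolding cut_off_def by blast
qed

lemma reach_delete_vertex_if_level_le:
  assumes "y \<in> V" "y \<noteq> c" "level y \<le> level c"
  shows "reach (delete_vertex (V, E) c) r y"
  using assms
proof (induction "level y" arbitrary: y)
  case 0
  then show ?case
    using level_eq_0 unfolding reach_delete_vertex by fastforce
next
  case (Suc k)
  obtain p where p: "E p y" "level p = k"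
    using level_parent[OF Suc.prems(1) Suc.hyps(2)[symmetric]] .
  then have "p \<noteq> c"
    using Suc.hyps(2) Suc.prems(3) by auto
  then have "reach (delete_vertex (V, E) c) r p"
    using Suc.hyps(1)[of p] p Suc.hyps(2) Suc.prems(3) edge_vertices by simp
  then show ?case
    using p(1) \<open>p \<noteq> c\<close> Suc.prems(2) unfolding reach_delete_vertex
    by (simp add: rtranclp.rtrancl_into_rtrancl)
qed

lemma level_less_cut_off:
  assumes "x \<in> cut_off c"
  shows "level c < level x"
  using assms reach_delete_vertex_if_level_le[of x c] unfolding cut_off_def by force

lemma cut_off_neighbour:
  assumes "x \<in> cut_off c"
  obtains d where "d \<in> cut_off c" "E c d"
proof -
  have "r \<notin> cut_off c"
    unfolding cut_off_def reach_delete_vertex by simp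
  moreover have "E\<^sup>*\<^sup>* x r"
    using reach_sym[OF is_graph] connected root assms
    unfolding cut_off_def connected_graph_def reach_eq_rtranclp by auto
  moreover have "E\<^sup>*\<^sup>* y z \<Longrightarrow> y \<in> cut_off c \<Longrightarrow> z \<notin> cut_off c \<Longrightarrow> \<exists>d \<in> cut_off c. E c d" for y z
  proof (induction rule: converse_rtranclp_induct)
    case (step y y')
    show ?case
    proof (cases "y' \<in> cut_off c")
      case True
      then show ?thesis using step by blast
    next
      case False
      then have "y' = c"
        using cut_off_edge step.hyps(1) step.prems(1) by blast
      then show ?thesis
        using step.hyps(1) step.prems(1) edge_sym by blast
    qed
  qed simp
  ultimately show thesis
    using assms that by blast
qed

lemma cut_vertex_child:
  assumes "c \<in> cut_vertices (V, E)" "c \<noteq> r"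
  obtains d where "d \<in> cut_off c" "E c d"
proof -
  obtain x where "x \<in> cut_off c"
    using cut_vertex_iff[OF is_graph connected, of r c] root assms unfolding cut_off_def by auto
  then show thesis
    using cut_off_neighbour that by blast
qed

lemma level_cut_off_neighbour:
  assumes "d \<in> cut_off c" "E c d"
  shows "level d = Suc (level c)"
  using level_less_cut_off[OF assms(1)] level_edge[OF assms(2)] by simp

lemma cut_off_no_edge_to_level:
  assumes "y \<in> cut_off c" "c' \<noteq> c" "level c' = level c"
  shows "\<not> E y c'"
  using cut_off_edge[OF assms(1) _ assms(2)] level_less_cut_off[of c' c] assms(3) by auto

lemma cut_off_children_separated:
  assumes "d \<in> cut_off c" "E c d" "d' \<in> cut_off c'" "E c' d'" "c \<noteq> c'" "level c = level c'"
  shows "d \<noteq> d'" "\<not> E c d'" "\<not> E d d'"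
proof -
  have no_edge: "\<not> E y c'" if "y \<in> cut_off c" for y
    using cut_off_no_edge_to_level[OF that] assms(5,6) by simp
  show "d \<noteq> d'"
    using no_edge[OF assms(1)] assms(4) edge_sym by blast
  show "\<not> E c d'"
    using cut_off_no_edge_to_level[OF assms(3)] assms(5,6) edge_sym by metis
  have "d' \<noteq> c"
    using level_cut_off_neighbour[OF assms(3,4)] assms(6) by auto
  then show "\<not> E d d'"
    using cut_off_edge[OF assms(1)] no_edge assms(4) edge_sym by blast
qed

end

section \<open>Matchings between consecutive levels\<close>

fun matching_bound :: "nat \<Rightarrow> nat \<Rightarrow> nat" where
  "matching_bound n 0 = 2"
| "matching_bound n (Suc l) = 2 * n * ((n + matching_bound n l) choose n)"

context rooted_graph
begin

definition level_matching :: "nat \<Rightarrow> 'i set \<Rightarrow> ('i \<Rightarrow> 'a) \<Rightarrow> ('i \<Rightarrow> 'a) \<Rightarrow> bool" where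
  "level_matching l I a b \<longleftrightarrow> finite I \<and>
     (\<forall>i\<in>I. E (a i) (b i) \<and> level (a i) = l \<and> level (b i) = Suc l) \<and>
     (\<forall>i\<in>I. \<forall>j\<in>I. i \<noteq> j \<longrightarrow> a i \<noteq> a j \<and> b i \<noteq> b j \<and> \<not> E (a i) (b j) \<and> \<not> E (b i) (b j))"

definition induced_level_matching :: "nat \<Rightarrow> 'i set \<Rightarrow> ('i \<Rightarrow> 'a) \<Rightarrow> ('i \<Rightarrow> 'a) \<Rightarrow> bool" where
  "induced_level_matching l I a b \<longleftrightarrow>
     level_matching l I a b \<and> (\<forall>i\<in>I. \<forall>j\<in>I. i \<noteq> j \<longrightarrow> \<not> E (a i) (a j))"

lemma level_matching_subset:
  "level_matching l I a b \<Longrightarrow> J \<subseteq> I \<Longrightarrow> level_matching l J a b"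
  unfolding level_matching_def using finite_subset by blast

lemma card_level_matching_0:
  assumes "level_matching 0 I a b"
  shows "card I \<le> 1"
proof -
  have "a i = r" if "i \<in> I" for i
    using assms that level_eq_0 edge_vertices unfolding level_matching_def by blast
  then show ?thesis
    using assms card_le_Suc0_iff_eq[of I] unfolding level_matching_def by auto
qed

lemma clique_star_or_induced_level_matching:
  assumes "level_matching l I a b" "(n + k) choose n \<le> card I"
  shows "induced_sub (clique_star n) (V, E) \<or> (\<exists>J \<subseteq> I. card J = k \<and> induced_level_matching l J a b)"
proof -
  have "finite I" "symp (\<lambda>i j. E (a i) (a j))"
    using assms(1) edge_sym unfolding level_matching_def by (auto intro: sympI)
  then show ?thesis
  proof (rule ramsey_symp[OF _ assms(2)])
    fix Y assume Y: "Y \<subseteq> I" "card Y = n" "\<And>i j. i \<in> Y \<Longrightarrow> j \<in> Y \<Longrightarrow> i \<noteq> j \<Longrightarrow> E (a i) (a j)"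
    have "induced_sub (clique_star (card Y)) (V, E)"
      using Y level_matching_subset[OF assms(1) Y(1)] unfolding level_matching_def
      by (intro induced_sub_clique_star) auto
    then show ?thesis
      using Y(2) by simp
  next
    fix Y assume Y: "Y \<subseteq> I" "card Y = k" "\<And>i j. i \<in> Y \<Longrightarrow> j \<in> Y \<Longrightarrow> i \<noteq> j \<Longrightarrow> \<not> E (a i) (a j)"
    then have "induced_level_matching l Y a b"
      using level_matching_subset[OF assms(1) Y(1)] unfolding induced_level_matching_def by blast
    then show ?thesis
      using Y(1,2) by blast
  qed
qed

lemma star_star_if_common_neighbour:
  assumes "induced_level_matching (Suc l) I a b" "u \<in> V" "level u = l" "n \<le> card {i \<in> I. E u (a i)}"
  shows "induced_sub (star_star n) (V, E)"
proof -
  obtain J where J: "J \<subseteq> {i \<in> I. E u (a i)}" "card J = n"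
    using obtain_subset_with_card_n[OF assms(4)] by metis
  have M: "level_matching (Suc l) J a b" "\<forall>i\<in>J. \<forall>j\<in>J. i \<noteq> j \<longrightarrow> \<not> E (a i) (a j)"
    using assms(1) level_matching_subset[of "Suc l" I a b J] J(1)
    unfolding induced_level_matching_def by auto
  have "induced_sub (star_star (card J)) (V, E)"
  proof (rule induced_sub_star_star[OF _ assms(2)])
    show "finite J"
      using M(1) unfolding level_matching_def by blast
    show "E (a i) (b i) \<and> E u (a i) \<and> \<not> E u (b i) \<and> u \<noteq> b i" if "i \<in> J" for i
      using M(1) J(1) that level_edge[of u "b i"] assms(3) unfolding level_matching_def by auto
    show "a i \<noteq> a j \<and> b i \<noteq> b j \<and> \<not> E (a i) (a j) \<and> \<not> E (a i) (b j) \<and> \<not> E (b i) (b j)"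
      if "i \<in> J" "j \<in> J" "i \<noteq> j" for i j
      using M that unfolding level_matching_def by blast
  qed
  then show ?thesis
    using J(2) by simp
qed

lemma level_matching_parents:
  assumes "level_matching (Suc l) I a b"
  obtains p where "\<forall>i\<in>I. E (p i) (a i) \<and> level (p i) = l"
proof -
  have "\<exists>q. E q (a i) \<and> level q = l" if "i \<in> I" for i
  proof -
    have "a i \<in> V" "level (a i) = Suc l"
      using assms that edge_vertices unfolding level_matching_def by auto
    then obtain q where "E q (a i)" "level q = l"
      by (rule level_parent)
    then show ?thesis
      by blast
  qed
  then have "\<forall>i\<in>I. \<exists>q. E q (a i) \<and> level q = l"
    by blast
  from bchoice[OF this] obtain p where "\<forall>i\<in>I. E (p i) (a i) \<and> level (p i) = l"
    by blast
  then show thesis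
    by (rule that)
qed

lemma level_matching_of_parents:
  assumes "induced_level_matching (Suc l) I a b" "0 < n" "2 * n * k \<le> card I"
    and no_star: "\<not> induced_sub (star_star n) (V, E)"
  obtains J p where "J \<subseteq> I" "k \<le> card J" "level_matching l J p a"
proof -
  have M: "level_matching (Suc l) I a b" "\<forall>i\<in>I. \<forall>j\<in>I. i \<noteq> j \<longrightarrow> \<not> E (a i) (a j)"
    using assms(1) unfolding induced_level_matching_def by auto
  obtain p where p: "\<forall>i\<in>I. E (p i) (a i) \<and> level (p i) = l"
    using level_matching_parents[OF M(1)] .
  have "card {j \<in> I. E (p i) (a j)} < n" if "i \<in> I" for i
  proof (rule ccontr)
    assume "\<not> ?thesis"
    moreover have "p i \<in> V" "level (p i) = l"
      using p that edge_vertices by auto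
    ultimately show False
      using star_star_if_common_neighbour[OF assms(1), of "p i" n] no_star by simp
  qed
  moreover have "finite I"
    using M(1) unfolding level_matching_def by blast
  ultimately obtain J where J: "J \<subseteq> I" "k \<le> card J"
    "\<forall>i\<in>J. \<forall>j\<in>J. i \<noteq> j \<longrightarrow> \<not> E (p i) (a j)"
    using independent_subset_if_out_degree_less[of I n "\<lambda>i j. E (p i) (a j)" k] assms(2,3)
    by blast
  have "level_matching l J p a"
    unfolding level_matching_def
  proof (intro conjI ballI impI)
    show "finite J"
      using M(1) J(1) finite_subset unfolding level_matching_def by blast
    fix i assume i: "i \<in> J"
    then show "E (p i) (a i)" "level (p i) = l" "level (a i) = Suc l"
      using p M(1) J(1) unfolding level_matching_def by auto
    fix j assume j: "j \<in> J" "i \<noteq> j"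
    show "\<not> E (p i) (a j)"
      using J(3) i j by blast
    then show "p i \<noteq> p j"
      using p J(1) j(1) by auto
    show "a i \<noteq> a j" "\<not> E (a i) (a j)"
      using M J(1) i j unfolding level_matching_def by blast+
  qed
  then show thesis
    using that J(1,2) by blast
qed

lemma card_induced_level_matching_less:
  assumes "0 < n" and no_clique: "\<not> induced_sub (clique_star n) (V, E)"
    and no_star: "\<not> induced_sub (star_star n) (V, E)"
  shows "induced_level_matching l I a b \<Longrightarrow> card I < matching_bound n l"
proof (induction l arbitrary: I a b)
  case 0
  then show ?case
    using card_level_matching_0 unfolding induced_level_matching_def by fastforce
next
  case (Suc l)
  show ?case
  proof (rule ccontr)
    assume "\<not> card I < matching_bound n (Suc l)"
    then obtain J p where J: "(n + matching_bound n l) choose n \<le> card J" "level_matching l J p a"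
      using level_matching_of_parents[OF Suc.prems assms(1) _ no_star] by (metis not_less matching_bound.simps(2))
    then obtain J' where "card J' = matching_bound n l" "induced_level_matching l J' p a"
      using clique_star_or_induced_level_matching no_clique by blast
    then show False
      using Suc.IH by fastforce
  qed
qed

lemma level_matching_cut_vertices:
  obtains d where "level_matching l {c \<in> cut_vertices (V, E) - {r}. level c = l} id d"
proof -
  define C where "C = {c \<in> cut_vertices (V, E) - {r}. level c = l}"
  have "\<exists>d. d \<in> cut_off c \<and> E c d" if "c \<in> C" for c
    using cut_vertex_child[of c] that unfolding C_def by blast
  then obtain d where d: "\<And>c. c \<in> C \<Longrightarrow> d c \<in> cut_off c \<and> E c (d c)"
    by metis
  have "level_matching l C id d"
    unfolding level_matching_def
  proof (intro conjI ballI impI)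
    show "finite C"
      using finite_vertices unfolding C_def by simp
    fix c assume c: "c \<in> C"
    then show "E (id c) (d c)" "level (id c) = l" "level (d c) = Suc l"
      using d level_cut_off_neighbour unfolding C_def by auto
    fix c' assume c': "c' \<in> C" "c \<noteq> c'"
    then have "level c = level c'"
      using c unfolding C_def by simp
    then show "id c \<noteq> id c'" "d c \<noteq> d c'" "\<not> E (id c) (d c')" "\<not> E (d c) (d c')"
      using cut_off_children_separated[of "d c" c "d c'" c'] d[OF c] d[OF c'(1)] c'(2) by auto
  qed
  then show thesis
    using that unfolding C_def by blast
qed

lemma card_cut_vertices_at_level_less:
  assumes "0 < n" and no_clique: "\<not> induced_sub (clique_star n) (V, E)"
    and no_star: "\<not> induced_sub (star_star n) (V, E)"
  shows "card {c \<in> cut_vertices (V, E) - {r}. level c = l} < (n + matching_bound n l) choose n"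
proof (rule ccontr)
  assume "\<not> ?thesis"
  moreover obtain d where "level_matching l {c \<in> cut_vertices (V, E) - {r}. level c = l} id d"
    using level_matching_cut_vertices .
  ultimately obtain J where "card J = matching_bound n l" "induced_level_matching l J id d"
    using clique_star_or_induced_level_matching no_clique by (meson not_less)
  then show False
    using card_induced_level_matching_less[OF assms] by fastforce
qed

lemma card_cut_vertices_le:
  assumes "0 < n" and no_clique: "\<not> induced_sub (clique_star n) (V, E)"
    and no_star: "\<not> induced_sub (star_star n) (V, E)"
    and no_path: "\<not> induced_sub (path_graph n) (V, E)"
  shows "card (cut_vertices (V, E)) \<le> Suc (\<Sum>l<n. (n + matching_bound n l) choose n)"
proof -
  let ?C = "\<lambda>l. {c \<in> cut_vertices (V, E) - {r}. level c = l}"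
  have "level c < n" if "c \<in> V" for c
    using induced_sub_path_graph[OF that, of n] no_path by linarith
  then have "cut_vertices (V, E) \<subseteq> insert r (\<Union>l<n. ?C l)"
    by auto
  then have "card (cut_vertices (V, E)) \<le> card (insert r (\<Union>l<n. ?C l))"
    using finite_vertices by (intro card_mono) auto
  also have "\<dots> \<le> Suc (card (\<Union>l<n. ?C l))"
    using finite_vertices by (simp add: card_insert_if)
  also have "\<dots> \<le> Suc (\<Sum>l<n. card (?C l))"
    using card_UN_le[of "{..<n}" ?C] by simp
  also have "\<dots> \<le> Suc (\<Sum>l<n. (n + matching_bound n l) choose n)"
    using card_cut_vertices_at_level_less[OF assms(1-3)] by (simp add: sum_mono less_imp_le)
  finally show ?thesis .
qed

end

lemma card_cut_vertices_bounded:
  fixes G :: "'a graph"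
  assumes "is_graph G" "connected_graph G" "0 < n"
    and "\<not> induced_sub (clique_star n) G" "\<not> induced_sub (star_star n) G"
    "\<not> induced_sub (path_graph n) G"
  shows "card (cut_vertices G) \<le> Suc (\<Sum>l<n. (n + matching_bound n l) choose n)"
proof -
  obtain r where "r \<in> fst G"
    using assms(2) unfolding connected_graph_def by blast
  then interpret rooted_graph "fst G" "snd G" r
    using assms(1,2) by unfold_locales simp_all
  show ?thesis
    using card_cut_vertices_le assms(3-6) by simp
qed

theorem theorem1p7:
  fixes \<H> :: "nat graph set"
  assumes "\<forall>H\<in>\<H>. is_graph H"
  shows "(\<exists>c::nat. \<forall>G::nat graph. is_graph G \<and> connected_graph G \<and> H_free \<H> G \<longrightarrow>
            card {v \<in> fst G. sdeg G v \<ge> 2} < c)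
     \<longleftrightarrow> (\<exists>n::nat. n > 0 \<and> fam_le \<H> {clique_star n, star_star n, path_graph n})"
proof
  assume "\<exists>c::nat. \<forall>G::nat graph. is_graph G \<and> connected_graph G \<and> H_free \<H> G \<longrightarrow>
            card {v \<in> fst G. sdeg G v \<ge> 2} < c"
  then obtain c where "\<forall>G::nat graph. is_graph G \<and> connected_graph G \<and> H_free \<H> G \<longrightarrow>
      card (cut_vertices G) < c"
    by blast
  then have "fam_le \<H> {clique_star (c + 2), star_star (c + 2), path_graph (c + 2)}"
    by (intro fam_le_obstructions_if_bounded) blast
  then show "\<exists>n::nat. n > 0 \<and> fam_le \<H> {clique_star n, star_star n, path_graph n}"
    by (intro exI[of _ "c + 2"]) simp
next
  assume "\<exists>n::nat. n > 0 \<and> fam_le \<H> {clique_star n, star_star n, path_graph n}"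
  then obtain n where n: "0 < n" "fam_le \<H> {clique_star n, star_star n, path_graph n}"
    by blast
  let ?c = "Suc (Suc (\<Sum>l<n. (n + matching_bound n l) choose n))"
  have "card (cut_vertices G) < ?c" if "is_graph G" "connected_graph G" "H_free \<H> G" for G :: "nat graph"
    using card_cut_vertices_bounded[OF that(1,2) n(1)] not_induced_sub_if_fam_le[OF n(2) that(3)]
    by simp
  then show "\<exists>c::nat. \<forall>G::nat graph. is_graph G \<and> connected_graph G \<and> H_free \<H> G \<longrightarrow>
      card {v \<in> fst G. sdeg G v \<ge> 2} < c"
    by blast
qed

end
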